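(* For every real $M\ge0$ and positive integers $N,K$, with $\mathcal{N}=\{1,\dots,N\}$, \[ \max_{s\in\{1,\dots,\lceil\min\{N,K\}/4\rceil\}}\bar{R}_s(M,\mathcal{N},s)\ge\frac{1}{48}R(M,N,K). \]
   Context: Caching problem: a server holds $N$ files of $F$ bits each, connected through a shared error-free link to users each with a cache of $MF$ bits. In the placement phase each user stores an arbitrary function of the files of at most $MF$ bits; in the delivery phase the demand vector is revealed, the server sends a message over the shared link, and each user must reconstruct its requested file from the message and its cache. The rate is message length divided by $F$. For $s\le N$, $\bar{R}_s(M,\mathcal{N},s)$ is the optimal expected rate (infimum over all placement and delivery schemes of the expected rate, achievable with vanishing error probability for all large $F$) for a system with $s$ users whose demand vector is uniformly distributed over vectors in $\mathcal{N}^s$ with $s$ distinct entries (i.e., files chosen uniformly at random without replacement). The function $R$ is defined by $R(M,N,K)=(1-M/N)\min\{\tfrac{N}{M}(1-(1-M/N)^K),N\}$ for $M\in(0,N]$, $R(0,N,K)=\min\{N,K\}$, and $R(M,N,K)=0$ for $M>N$. *)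

theory Defs
  imports Complex_Main "HOL-Library.FuncSet"
begin

text \<open>Files are indexed by 0..N-1 (a relabelling of 1..N), users by 0..s-1.
  A file library is an extensional map from {..<N} to bit strings of length F.\<close>

definition file_libs :: "nat \<Rightarrow> nat \<Rightarrow> (nat \<Rightarrow> bool list) set" where
  "file_libs N F = ({..<N} \<rightarrow>\<^sub>E {w. length w = F})"

definition distinct_demands :: "nat \<Rightarrow> nat \<Rightarrow> (nat \<Rightarrow> nat) set" where
  "distinct_demands N s = {d \<in> {..<s} \<rightarrow>\<^sub>E {..<N}. inj_on d {..<s}}"

text \<open>A (deterministic) placement/delivery scheme with s users, N files of F bits,
  cache size M*F bits, message lengths L d per demand, error probability (uniform
  random files, worst case over distinct demands) at most eps and expected rate
  (demand uniform over distinct demand vectors) at most R.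
  phi k W : cache content of user k; psi d W : message for demand d;
  mu d k msg cache : decoded file of user k.\<close>
definition good_scheme ::
  "real \<Rightarrow> nat \<Rightarrow> nat \<Rightarrow> nat \<Rightarrow> real \<Rightarrow> real \<Rightarrow> bool" where
  "good_scheme M N s F R eps \<longleftrightarrow>
     (\<exists>(phi :: nat \<Rightarrow> (nat \<Rightarrow> bool list) \<Rightarrow> bool list)
        (psi :: (nat \<Rightarrow> nat) \<Rightarrow> (nat \<Rightarrow> bool list) \<Rightarrow> bool list)
        (mu :: (nat \<Rightarrow> nat) \<Rightarrow> nat \<Rightarrow> bool list \<Rightarrow> bool list \<Rightarrow> bool list)
        (L :: (nat \<Rightarrow> nat) \<Rightarrow> nat).
        (\<forall>k<s. \<forall>W\<in>file_libs N F. real (length (phi k W)) \<le> M * real F) \<and>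
        (\<forall>d\<in>distinct_demands N s. \<forall>W\<in>file_libs N F. length (psi d W) = L d) \<and>
        (\<forall>d\<in>distinct_demands N s.
           real (card {W \<in> file_libs N F. \<exists>k<s. mu d k (psi d W) (phi k W) \<noteq> W (d k)})
             \<le> eps * real (card (file_libs N F))) \<and>
        (\<Sum>d\<in>distinct_demands N s. real (L d))
           \<le> R * real F * real (card (distinct_demands N s)))"

definition achievable_exp_rate :: "real \<Rightarrow> nat \<Rightarrow> nat \<Rightarrow> real \<Rightarrow> bool" where
  "achievable_exp_rate M N s R \<longleftrightarrow>
     (\<forall>eps>0. \<exists>F0. \<forall>F\<ge>F0. good_scheme M N s F R eps)"

definition Rbar :: "real \<Rightarrow> nat \<Rightarrow> nat \<Rightarrow> real" where
  "Rbar M N s = Inf {R. achievable_exp_rate M N s R}"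

definition Rfun :: "real \<Rightarrow> nat \<Rightarrow> nat \<Rightarrow> real" where
  "Rfun M N K =
     (if M = 0 then real (min N K)
      else if M > real N then 0
      else (1 - M / real N) * min (real N / M * (1 - (1 - M / real N) ^ K)) (real N))"

end

theory Submission
  imports Defs "HOL-Combinatorics.Permutations"
begin

text \<open>
  Fix \<open>b\<close> with \<open>b s \<le> N\<close> and a scheme with error probability at most \<open>1 / (2 b)\<close>, and take \<open>b\<close>
  demand vectors that together request \<open>b s\<close> distinct files. By the union bound at least half of
  all file libraries are decoded correctly for all \<open>b\<close> demands at once, and such a library is
  determined by the \<open>b\<close> messages, the \<open>s\<close> caches and the \<open>N - b s\<close> files nobody requested.
  Counting bit strings gives \<open>b s F \<le> (total length of the b messages) + s (M F + 1) + 1\<close>.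
  Relabelling the files by a permutation does not change the expected rate, and averaging over
  all permutations turns the \<open>b\<close> message lengths into \<open>b\<close> times the expected length, so every
  achievable expected rate is at least \<open>s - s M / b\<close>.

  Finally \<open>R(M, N, K) \<le> (1 - M/N) min {N/M, K, N}\<close> by Bernoulli's inequality. If this minimum
  is below 48, take \<open>s = 1\<close> and \<open>b = N\<close>; otherwise \<open>s = \<lfloor>min / 4\<rfloor>\<close> and \<open>b = \<lfloor>N / s\<rfloor> \<ge> 2 M\<close>
  give the rate \<open>s / 2\<close>.
\<close>

lemma finite_bool_lists_length_eq [simp]: "finite {w :: bool list. length w = n}"
  using finite_lists_length_eq[of "UNIV :: bool set" n] by simp

lemma card_bool_lists_length_eq: "card {w :: bool list. length w = n} = 2 ^ n"
  using card_lists_length_eq[of "UNIV :: bool set" n] by simp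

lemma finite_bool_lists_length_le [simp]: "finite {w :: bool list. length w \<le> n}"
  using finite_lists_length_le[of "UNIV :: bool set" n] by simp

lemma card_bool_lists_length_le: "card {w :: bool list. length w \<le> n} < 2 ^ Suc n"
proof -
  have "(\<Sum>i\<le>n. 2 ^ i :: nat) < 2 ^ Suc n"
    by (induction n) auto
  then show ?thesis
    using card_lists_length_le[of "UNIV :: bool set" n] by simp
qed

lemma finite_file_libs: "finite (file_libs N F)"
  unfolding file_libs_def by (intro finite_PiE) simp_all

lemma card_file_libs: "card (file_libs N F) = 2 ^ (F * N)"
  unfolding file_libs_def by (simp add: card_PiE card_bool_lists_length_eq power_mult)

lemma take_drop_concat_eq_nth:
  assumes "\<forall>x\<in>set xs. length x = F" and "k < length xs"
  shows "take F (drop (k * F) (concat xs)) = xs ! k"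
  using assms
proof (induction xs arbitrary: k)
  case (Cons x xs)
  then show ?case
    by (cases k) (simp_all add: add.commute)
qed simp

lemma finite_distinct_demands: "finite (distinct_demands N s)"
  unfolding distinct_demands_def by (rule finite_subset[of _ "{..<s} \<rightarrow>\<^sub>E {..<N}"]) (auto intro: finite_PiE)

lemma distinct_demands_imp_le:
  assumes "d \<in> distinct_demands N s"
  shows "s \<le> N"
proof -
  have "card (d ` {..<s}) = s" and "d ` {..<s} \<subseteq> {..<N}"
    using assms unfolding distinct_demands_def by (auto simp: card_image)
  then show ?thesis
    by (metis card_lessThan card_mono finite_lessThan)
qed

lemma restrict_id_in_distinct_demands:
  "s \<le> N \<Longrightarrow> restrict id {..<s} \<in> distinct_demands N s"
  unfolding distinct_demands_def by auto

lemma card_distinct_demands_pos: "s \<le> N \<Longrightarrow> 0 < card (distinct_demands N s)"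
  using restrict_id_in_distinct_demands finite_distinct_demands card_gt_0_iff by blast

lemma distinct_demand_extends_to_permutation:
  assumes d: "d \<in> distinct_demands N s"
  obtains \<tau> where "\<tau> permutes {..<N}" and "\<And>k. k < s \<Longrightarrow> \<tau> k = d k"
proof -
  have "s \<le> N"
    using distinct_demands_imp_le[OF d] .
  have inj: "inj_on d {..<s}" and range: "d ` {..<s} \<subseteq> {..<N}"
    using d unfolding distinct_demands_def by auto
  have "card ({..<N} - {..<s}) = card ({..<N} - d ` {..<s})"
    using inj range \<open>s \<le> N\<close> by (simp add: card_Diff_subset card_image)
  then obtain g where g: "bij_betw g ({..<N} - {..<s}) ({..<N} - d ` {..<s})"
    by (metis finite_Diff finite_lessThan finite_same_card_bij)
  define \<tau> where "\<tau> x = (if x < s then d x else if x < N then g x else x)" for x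
  have "bij_betw \<tau> {..<s} (d ` {..<s})"
    using inj bij_betw_cong[of "{..<s}" \<tau> d] by (simp add: \<tau>_def bij_betw_imageI)
  moreover have "bij_betw \<tau> ({..<N} - {..<s}) ({..<N} - d ` {..<s})"
    using g bij_betw_cong[of "{..<N} - {..<s}" \<tau> g] by (simp add: \<tau>_def)
  ultimately have "bij_betw \<tau> ({..<s} \<union> ({..<N} - {..<s})) (d ` {..<s} \<union> ({..<N} - d ` {..<s}))"
    by (rule bij_betw_combine) blast
  moreover have "{..<s} \<union> ({..<N} - {..<s}) = {..<N}" "d ` {..<s} \<union> ({..<N} - d ` {..<s}) = {..<N}"
    using range \<open>s \<le> N\<close> by auto
  ultimately have "bij_betw \<tau> {..<N} {..<N}"
    by simp
  then have "\<tau> permutes {..<N}"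
    by (rule bij_imp_permutes) (use \<open>s \<le> N\<close> in \<open>simp add: \<tau>_def\<close>)
  then show thesis
    using that by (simp add: \<tau>_def)
qed

definition relabel :: "nat \<Rightarrow> (nat \<Rightarrow> nat) \<Rightarrow> (nat \<Rightarrow> nat) \<Rightarrow> nat \<Rightarrow> nat" where
  "relabel s \<sigma> d = restrict (\<sigma> \<circ> d) {..<s}"

lemma relabel_in_distinct_demands:
  assumes \<sigma>: "\<sigma> permutes {..<N}" and d: "d \<in> distinct_demands N s"
  shows "relabel s \<sigma> d \<in> distinct_demands N s"
proof -
  have "inj_on (\<sigma> \<circ> d) {..<s}"
    using d inj_on_subset[OF permutes_inj[OF \<sigma>] subset_UNIV]
    unfolding distinct_demands_def by (blast intro: comp_inj_on)
  moreover have "\<sigma> (d k) < N" if "k < s" for k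
    using d that permutes_in_image[OF \<sigma>, of "d k"] unfolding distinct_demands_def by auto
  ultimately show ?thesis
    unfolding distinct_demands_def relabel_def by auto
qed

lemma relabel_inv:
  assumes "\<sigma> permutes {..<N}" and "d \<in> distinct_demands N s"
  shows "relabel s (inv \<sigma>) (relabel s \<sigma> d) = d"
proof
  fix k
  show "relabel s (inv \<sigma>) (relabel s \<sigma> d) k = d k"
  proof (cases "k < s")
    case True
    then show ?thesis
      by (simp add: relabel_def permutes_inverses(2)[OF assms(1)])
  next
    case False
    then show ?thesis
      using assms(2) PiE_arb[of d "{..<s}" "\<lambda>_. {..<N}" k]
      by (simp add: relabel_def distinct_demands_def)
  qed
qed

lemma sum_distinct_demands_relabel:
  assumes "\<sigma> permutes {..<N}"
  shows "(\<Sum>d\<in>distinct_demands N s. g (relabel s \<sigma> d)) = (\<Sum>d\<in>distinct_demands N s. g d)"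
proof (rule sum.reindex_bij_witness[of _ "relabel s (inv \<sigma>)" "relabel s \<sigma>"])
  have inv: "inv \<sigma> permutes {..<N}"
    using permutes_inv[OF assms] .
  show "relabel s \<sigma> (relabel s (inv \<sigma>) d) = d" if "d \<in> distinct_demands N s" for d
    using relabel_inv[OF inv that] by (simp add: inv_inv_eq permutes_bij[OF assms])
  show "relabel s \<sigma> d \<in> distinct_demands N s" if "d \<in> distinct_demands N s" for d
    using relabel_in_distinct_demands[OF assms that] .
  show "relabel s (inv \<sigma>) d \<in> distinct_demands N s" if "d \<in> distinct_demands N s" for d
    using relabel_in_distinct_demands[OF inv that] .
qed (use relabel_inv[OF assms] in simp_all)

lemma sum_permutations_relabel:
  assumes "d \<in> distinct_demands N s"
  shows "(\<Sum>\<sigma>\<in>{\<sigma>. \<sigma> permutes {..<N}}. g (relabel s \<sigma> d))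
       = (\<Sum>\<sigma>\<in>{\<sigma>. \<sigma> permutes {..<N}}. g (restrict \<sigma> {..<s}))"
proof -
  obtain \<tau> where \<tau>: "\<tau> permutes {..<N}" and \<tau>_d: "\<And>k. k < s \<Longrightarrow> \<tau> k = d k"
    using distinct_demand_extends_to_permutation[OF assms] by blast
  have "restrict (\<sigma> \<circ> \<tau>) {..<s} = relabel s \<sigma> d" for \<sigma>
    using \<tau>_d unfolding relabel_def by (auto simp: restrict_def)
  then show ?thesis
    using sum_permutations_compose_right[OF \<tau>, of "\<lambda>\<sigma>. g (restrict \<sigma> {..<s})"] by simp
qed

lemma card_distinct_demands_mult_sum_permutations_relabel:
  fixes g :: "(nat \<Rightarrow> nat) \<Rightarrow> 'a :: comm_semiring_1"
  assumes d: "d \<in> distinct_demands N s"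
  shows "of_nat (card (distinct_demands N s)) * (\<Sum>\<sigma>\<in>{\<sigma>. \<sigma> permutes {..<N}}. g (relabel s \<sigma> d))
       = of_nat (card {\<sigma>. \<sigma> permutes {..<N}}) * (\<Sum>d\<in>distinct_demands N s. g d)"
proof -
  let ?D = "distinct_demands N s" and ?P = "{\<sigma>. \<sigma> permutes {..<N}}"
  have "(\<Sum>d'\<in>?D. \<Sum>\<sigma>\<in>?P. g (relabel s \<sigma> d')) = (\<Sum>d'\<in>?D. \<Sum>\<sigma>\<in>?P. g (restrict \<sigma> {..<s}))"
    by (intro sum.cong refl sum_permutations_relabel)
  then have "of_nat (card ?D) * (\<Sum>\<sigma>\<in>?P. g (relabel s \<sigma> d)) = (\<Sum>d'\<in>?D. \<Sum>\<sigma>\<in>?P. g (relabel s \<sigma> d'))"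
    by (simp add: sum_permutations_relabel[OF d])
  also have "\<dots> = (\<Sum>\<sigma>\<in>?P. \<Sum>d'\<in>?D. g (relabel s \<sigma> d'))"
    by (rule sum.swap)
  also have "\<dots> = (\<Sum>\<sigma>\<in>?P. \<Sum>d'\<in>?D. g d')"
    by (rule sum.cong[OF refl]) (simp add: sum_distinct_demands_relabel)
  finally show ?thesis
    by simp
qed

lemma inj_on_mult_add_lessThan: "inj_on (\<lambda>(j, k). j * s + k :: nat) (A \<times> {..<s})"
proof (rule inj_onI, clarify)
  fix j k j' k' assume "k < s" "k' < s" and "j * s + k = j' * s + k'"
  then show "j = j' \<and> k = k'"
    by (metis add.commute div_mult_self1 div_less less_nat_zero_code mod_mult_self1 mod_less add_0 not_less0)
qed

definition block :: "nat \<Rightarrow> nat \<Rightarrow> nat \<Rightarrow> nat" where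
  "block s j = restrict (\<lambda>k. j * s + k) {..<s}"

lemma block_in_distinct_demands:
  assumes "j < b" and "b * s \<le> N"
  shows "block s j \<in> distinct_demands N s"
proof -
  have "j * s + k < N" if "k < s" for k
  proof -
    have "j * s + k < Suc j * s"
      using that by simp
    also have "\<dots> \<le> b * s"
      using \<open>j < b\<close> by (intro mult_right_mono) simp_all
    finally show ?thesis
      using \<open>b * s \<le> N\<close> by simp
  qed
  then show ?thesis
    by (simp add: block_def distinct_demands_def inj_on_def)
qed

lemma inj_on_relabel_block:
  assumes "\<sigma> permutes {..<N}"
  shows "inj_on (\<lambda>(j, k). relabel s \<sigma> (block s j) k) (A \<times> {..<s})"
proof -
  have "inj_on (\<sigma> \<circ> (\<lambda>(j, k). j * s + k)) (A \<times> {..<s})"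
    using inj_on_mult_add_lessThan inj_on_subset[OF permutes_inj[OF assms] subset_UNIV]
    by (blast intro: comp_inj_on)
  then show ?thesis
    by (rule inj_on_cong[THEN iffD1, rotated]) (auto simp: relabel_def block_def)
qed

locale caching_scheme =
  fixes M eps :: real and N s F :: nat
    and phi :: "nat \<Rightarrow> (nat \<Rightarrow> bool list) \<Rightarrow> bool list"
    and psi :: "(nat \<Rightarrow> nat) \<Rightarrow> (nat \<Rightarrow> bool list) \<Rightarrow> bool list"
    and mu :: "(nat \<Rightarrow> nat) \<Rightarrow> nat \<Rightarrow> bool list \<Rightarrow> bool list \<Rightarrow> bool list"
    and L :: "(nat \<Rightarrow> nat) \<Rightarrow> nat"
  assumes cache_size: "k < s \<Longrightarrow> W \<in> file_libs N F \<Longrightarrow> real (length (phi k W)) \<le> M * real F"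
    and message_length: "d \<in> distinct_demands N s \<Longrightarrow> W \<in> file_libs N F \<Longrightarrow> length (psi d W) = L d"
    and decoding_errors: "d \<in> distinct_demands N s \<Longrightarrow>
      real (card {W \<in> file_libs N F. \<exists>k<s. mu d k (psi d W) (phi k W) \<noteq> W (d k)})
        \<le> eps * real (card (file_libs N F))"

lemma good_scheme_iff:
  "good_scheme M N s F R eps \<longleftrightarrow>
     (\<exists>phi psi mu L. caching_scheme M eps N s F phi psi mu L \<and>
        (\<Sum>d\<in>distinct_demands N s. real (L d)) \<le> R * real F * real (card (distinct_demands N s)))"
  unfolding good_scheme_def caching_scheme_def by blast

context caching_scheme
begin

definition decodes :: "(nat \<Rightarrow> nat) \<Rightarrow> (nat \<Rightarrow> bool list) \<Rightarrow> bool" where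
  "decodes d W \<longleftrightarrow> (\<forall>k<s. mu d k (psi d W) (phi k W) = W (d k))"

lemma card_not_decodes_le:
  "d \<in> distinct_demands N s \<Longrightarrow>
     real (card {W \<in> file_libs N F. \<not> decodes d W}) \<le> eps * real (card (file_libs N F))"
  using decoding_errors by (simp add: decodes_def)

lemma card_file_libs_le_card_decodes_all:
  assumes demands: "\<And>j. j < b \<Longrightarrow> ds j \<in> distinct_demands N s"
    and small_error: "real b * eps \<le> 1 / 2"
  shows "real (card (file_libs N F)) \<le> 2 * real (card {W \<in> file_libs N F. \<forall>j<b. decodes (ds j) W})"
proof -
  let ?LIB = "file_libs N F"
  define Bad where "Bad j = {W \<in> ?LIB. \<not> decodes (ds j) W}" for j
  have "real (card (\<Union>j<b. Bad j)) \<le> (\<Sum>j<b. real (card (Bad j)))"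
    using card_UN_le[of "{..<b}" Bad] by (simp flip: of_nat_sum)
  also have "\<dots> \<le> (\<Sum>j<b. eps * real (card ?LIB))"
    unfolding Bad_def using demands card_not_decodes_le by (intro sum_mono) simp
  also have "\<dots> \<le> real (card ?LIB) / 2"
    using mult_right_mono[OF small_error, of "real (card ?LIB)"] by simp
  finally have bad: "real (card (\<Union>j<b. Bad j)) \<le> real (card ?LIB) / 2" .
  have decoded: "{W \<in> ?LIB. \<forall>j<b. decodes (ds j) W} = ?LIB - (\<Union>j<b. Bad j)"
    unfolding Bad_def by blast
  have "(\<Union>j<b. Bad j) \<subseteq> ?LIB"
    unfolding Bad_def by blast
  then have "card (?LIB - (\<Union>j<b. Bad j)) = card ?LIB - card (\<Union>j<b. Bad j)"
    and "card (\<Union>j<b. Bad j) \<le> card ?LIB"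
    using finite_file_libs by (simp_all add: card_Diff_subset card_mono finite_subset)
  then show ?thesis
    using bad decoded by (simp add: of_nat_diff)
qed

lemma decodes_all_eqI:
  assumes "W \<in> file_libs N F" and "W' \<in> file_libs N F"
    and decodes: "\<And>j. j < b \<Longrightarrow> decodes (ds j) W" "\<And>j. j < b \<Longrightarrow> decodes (ds j) W'"
    and messages: "\<And>j. j < b \<Longrightarrow> psi (ds j) W = psi (ds j) W'"
    and caches: "\<And>k. k < s \<Longrightarrow> phi k W = phi k W'"
    and other_files: "\<And>x. x < N \<Longrightarrow> x \<notin> (\<lambda>(j, k). ds j k) ` ({..<b} \<times> {..<s}) \<Longrightarrow> W x = W' x"
  shows "W = W'"
proof
  fix x
  show "W x = W' x"
  proof (cases "x \<in> (\<lambda>(j, k). ds j k) ` ({..<b} \<times> {..<s})")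
    case True
    then obtain j k where jk: "j < b" "k < s" and x: "x = ds j k"
      by auto
    have "W x = mu (ds j) k (psi (ds j) W) (phi k W)"
      using decodes(1)[OF jk(1)] jk(2) x unfolding decodes_def by simp
    also have "\<dots> = mu (ds j) k (psi (ds j) W') (phi k W')"
      using messages[OF jk(1)] caches[OF jk(2)] by simp
    also have "\<dots> = W' x"
      using decodes(2)[OF jk(1)] jk(2) x unfolding decodes_def by simp
    finally show ?thesis .
  next
    case False
    then show ?thesis
      using assms(1,2) other_files unfolding file_libs_def by (metis PiE_arb lessThan_iff)
  qed
qed

lemma card_decodes_all_le:
  assumes demands: "\<And>j. j < b \<Longrightarrow> ds j \<in> distinct_demands N s"
    and distinct_files: "inj_on (\<lambda>(j, k). ds j k) ({..<b} \<times> {..<s})"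
    and cache_bound: "\<And>k W. k < s \<Longrightarrow> W \<in> file_libs N F \<Longrightarrow> length (phi k W) \<le> n"
  shows "card {W \<in> file_libs N F. \<forall>j<b. decodes (ds j) W}
    \<le> 2 ^ ((\<Sum>j<b. L (ds j)) + Suc n * s + F * (N - b * s))"
proof -
  define G where "G = {W \<in> file_libs N F. \<forall>j<b. decodes (ds j) W}"
  define U where "U = (\<lambda>(j, k). ds j k) ` ({..<b} \<times> {..<s})"
  define enc where "enc W = (restrict (\<lambda>j. psi (ds j) W) {..<b}, restrict (\<lambda>k. phi k W) {..<s},
    restrict W ({..<N} - U))" for W
  define T1 where "T1 = (\<Pi>\<^sub>E j\<in>{..<b}. {w :: bool list. length w = L (ds j)})"
  define T2 where "T2 = (\<Pi>\<^sub>E k\<in>{..<s}. {w :: bool list. length w \<le> n})"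
  define T3 where "T3 = (\<Pi>\<^sub>E x\<in>{..<N} - U. {w :: bool list. length w = F})"
  have "inj_on enc G"
  proof (rule inj_onI)
    fix W W' assume "W \<in> G" "W' \<in> G" and eq: "enc W = enc W'"
    show "W = W'"
    proof (rule decodes_all_eqI)
      show "psi (ds j) W = psi (ds j) W'" if "j < b" for j
        using fun_cong[OF arg_cong[OF eq, of fst], of j] that by (simp add: enc_def)
      show "phi k W = phi k W'" if "k < s" for k
        using fun_cong[OF arg_cong[OF eq, of "fst \<circ> snd"], of k] that by (simp add: enc_def)
      show "W x = W' x" if "x < N" "x \<notin> (\<lambda>(j, k). ds j k) ` ({..<b} \<times> {..<s})" for x
        using fun_cong[OF arg_cong[OF eq, of "snd \<circ> snd"], of x] that by (simp add: enc_def U_def)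
    qed (use \<open>W \<in> G\<close> \<open>W' \<in> G\<close> in \<open>simp_all add: G_def\<close>)
  qed
  moreover have "enc ` G \<subseteq> T1 \<times> T2 \<times> T3"
    using demands message_length cache_bound
    by (auto simp: G_def enc_def T1_def T2_def T3_def file_libs_def)
  moreover have "finite (T1 \<times> T2 \<times> T3)"
    by (simp add: T1_def T2_def T3_def finite_PiE)
  ultimately have "card G \<le> card (T1 \<times> T2 \<times> T3)"
    by (rule card_inj_on_le)
  also have "\<dots> = card T1 * card T2 * card T3"
    by (simp add: card_cartesian_product)
  also have "\<dots> \<le> 2 ^ (\<Sum>j<b. L (ds j)) * 2 ^ (Suc n * s) * 2 ^ (F * (N - b * s))"
  proof (intro mult_mono)
    show "card T1 \<le> 2 ^ (\<Sum>j<b. L (ds j))"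
      by (simp add: T1_def card_PiE card_bool_lists_length_eq power_sum)
    have "card T2 = card {w :: bool list. length w \<le> n} ^ s"
      by (simp add: T2_def card_PiE)
    also have "\<dots> \<le> (2 ^ Suc n) ^ s"
      using card_bool_lists_length_le[of n] by (intro power_mono) simp_all
    finally show "card T2 \<le> 2 ^ (Suc n * s)"
      by (simp only: power_mult)
    have "card U = b * s"
      using distinct_files by (simp add: U_def card_image card_cartesian_product)
    moreover have "U \<subseteq> {..<N}"
      using demands by (auto simp: U_def distinct_demands_def)
    ultimately show "card T3 \<le> 2 ^ (F * (N - b * s))"
      by (simp add: T3_def card_PiE card_bool_lists_length_eq card_Diff_subset finite_subset power_mult)
  qed simp_all
  finally show ?thesis
    by (simp add: G_def power_add)
qed

lemma cut_set_bound:
  assumes demands: "\<And>j. j < b \<Longrightarrow> ds j \<in> distinct_demands N s"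
    and distinct_files: "inj_on (\<lambda>(j, k). ds j k) ({..<b} \<times> {..<s})"
    and small_error: "real b * eps \<le> 1 / 2" and "0 \<le> M"
  shows "real (b * s * F) \<le> (\<Sum>j<b. real (L (ds j))) + real s * (M * real F + 1) + 1"
proof -
  define n where "n = nat \<lfloor>M * real F\<rfloor>"
  have n: "real n \<le> M * real F"
    using \<open>0 \<le> M\<close> by (simp add: n_def)
  have "length (phi k W) \<le> n" if "k < s" "W \<in> file_libs N F" for k W
    using cache_size[OF that] unfolding n_def by (simp add: le_nat_floor)
  note decoded_le = card_decodes_all_le[OF demands distinct_files this]
  have "card (file_libs N F) \<le> 2 * card {W \<in> file_libs N F. \<forall>j<b. decodes (ds j) W}"
    using card_file_libs_le_card_decodes_all[of b ds, OF demands small_error] by linarith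
  then have "(2::nat) ^ (F * N) \<le> 2 ^ ((\<Sum>j<b. L (ds j)) + Suc n * s + F * (N - b * s) + 1)"
    using decoded_le by (simp add: card_file_libs)
  then have "F * N \<le> (\<Sum>j<b. L (ds j)) + Suc n * s + F * (N - b * s) + 1"
    by (rule power_le_imp_le_exp[rotated]) simp
  moreover have "(\<lambda>(j, k). ds j k) ` ({..<b} \<times> {..<s}) \<subseteq> {..<N}"
    using demands by (auto simp: distinct_demands_def PiE_iff)
  then have "b * s \<le> N"
    using card_inj_on_le[OF distinct_files _ finite_lessThan] by (simp add: card_cartesian_product)
  then have "F * N = F * (N - b * s) + b * s * F"
    by (simp add: diff_mult_distrib2)
  ultimately have "b * s * F \<le> (\<Sum>j<b. L (ds j)) + Suc n * s + 1"
    by linarith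
  then have "real (b * s * F) \<le> real ((\<Sum>j<b. L (ds j)) + Suc n * s + 1)"
    by (simp only: of_nat_le_iff)
  also have "\<dots> = (\<Sum>j<b. real (L (ds j))) + (real n + 1) * real s + 1"
    by (simp add: algebra_simps)
  also have "\<dots> \<le> (\<Sum>j<b. real (L (ds j))) + (M * real F + 1) * real s + 1"
    using n by (simp add: mult_right_mono)
  finally show ?thesis
    by (simp add: algebra_simps)
qed

lemma expected_rate_lower_bound:
  assumes "b * s \<le> N" and small_error: "real b * eps \<le> 1 / 2" and "0 \<le> M"
  shows "real (card (distinct_demands N s)) * (real (b * s * F) - real s * (M * real F + 1) - 1)
    \<le> real b * (\<Sum>d\<in>distinct_demands N s. real (L d))"
proof -
  let ?D = "distinct_demands N s" and ?P = "{\<sigma>. \<sigma> permutes {..<N}}"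
  define B where "B = real (b * s * F) - real s * (M * real F + 1) - 1"
  note blocks = block_in_distinct_demands[OF _ \<open>b * s \<le> N\<close>]
  have "B \<le> (\<Sum>j<b. real (L (relabel s \<sigma> (block s j))))" if \<sigma>: "\<sigma> permutes {..<N}" for \<sigma>
    using cut_set_bound[of b "\<lambda>j. relabel s \<sigma> (block s j)",
        OF relabel_in_distinct_demands[OF \<sigma> blocks]
        inj_on_relabel_block[OF \<sigma>] small_error \<open>0 \<le> M\<close>]
    unfolding B_def by simp
  then have "real (card ?D) * (\<Sum>\<sigma>\<in>?P. B)
      \<le> real (card ?D) * (\<Sum>\<sigma>\<in>?P. \<Sum>j<b. real (L (relabel s \<sigma> (block s j))))"
    by (intro mult_left_mono sum_mono) simp_all
  then have "real (card ?P) * (real (card ?D) * B)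
      \<le> real (card ?D) * (\<Sum>\<sigma>\<in>?P. \<Sum>j<b. real (L (relabel s \<sigma> (block s j))))"
    by (simp add: mult.left_commute)
  also have "\<dots> = (\<Sum>j<b. real (card ?D) * (\<Sum>\<sigma>\<in>?P. real (L (relabel s \<sigma> (block s j)))))"
    by (simp add: sum_distrib_left sum.swap[of _ ?P])
  also have "\<dots> = (\<Sum>j<b. real (card ?P) * (\<Sum>d\<in>?D. real (L d)))"
    using card_distinct_demands_mult_sum_permutations_relabel[OF blocks, where g = "\<lambda>d. real (L d)"]
    by (intro sum.cong) simp_all
  also have "\<dots> = real (card ?P) * (real b * (\<Sum>d\<in>?D. real (L d)))"
    by simp
  finally have "real (card ?P) * (real (card ?D) * B) \<le> real (card ?P) * (real b * (\<Sum>d\<in>?D. real (L d)))" .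
  moreover have "0 < card ?P"
    using finite_permutations[of "{..<N}"] permutes_id[of "{..<N}"] by (auto simp: card_gt_0_iff simp del: permutes_id)
  ultimately show ?thesis
    unfolding B_def by simp
qed

end

lemma nonpos_if_mult_of_nat_bounded:
  fixes c a :: real
  assumes "\<And>F. F0 \<le> F \<Longrightarrow> real F * c \<le> a"
  shows "c \<le> 0"
proof (rule ccontr)
  assume "\<not> c \<le> 0"
  define F where "F = max F0 (nat \<lceil>(a + 1) / c\<rceil>)"
  have "(a + 1) / c \<le> real F"
    unfolding F_def by linarith
  then have "a + 1 \<le> real F * c"
    using \<open>\<not> c \<le> 0\<close> by (simp add: field_simps)
  with assms[of F] show False
    unfolding F_def by simp
qed

lemma achievable_exp_rate_lower_bound:
  assumes ach: "achievable_exp_rate M N s R" and "1 \<le> b" and "b * s \<le> N" and "0 \<le> M"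
  shows "real s - real s * M / real b \<le> R"
proof -
  define eps where "eps = 1 / (2 * real b)"
  have "0 < eps" and small_error: "real b * eps \<le> 1 / 2"
    using \<open>1 \<le> b\<close> by (simp_all add: eps_def)
  then obtain F0 where F0: "\<And>F. F0 \<le> F \<Longrightarrow> good_scheme M N s F R eps"
    using ach unfolding achievable_exp_rate_def by blast
  have "s \<le> N"
    using \<open>1 \<le> b\<close> \<open>b * s \<le> N\<close> by (metis le_trans mult_le_mono1 mult_1)
  then have D: "0 < real (card (distinct_demands N s))"
    by (simp add: card_distinct_demands_pos)
  have "real F * (real b * real s - real s * M - real b * R) \<le> real s + 1" if F: "F0 \<le> F" for F
  proof -
    obtain phi psi mu L where scheme: "caching_scheme M eps N s F phi psi mu L"
      and rate: "(\<Sum>d\<in>distinct_demands N s. real (L d)) \<le> R * real F * real (card (distinct_demands N s))"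
      using F0[OF F] unfolding good_scheme_iff by blast
    interpret caching_scheme M eps N s F phi psi mu L
      by (fact scheme)
    have "real (card (distinct_demands N s)) * (real (b * s * F) - real s * (M * real F + 1) - 1)
        \<le> real b * (\<Sum>d\<in>distinct_demands N s. real (L d))"
      using expected_rate_lower_bound[OF \<open>b * s \<le> N\<close> small_error \<open>0 \<le> M\<close>] .
    also have "\<dots> \<le> real (card (distinct_demands N s)) * (real b * R * real F)"
      using rate \<open>1 \<le> b\<close> by (simp add: mult_left_mono mult.commute mult.left_commute)
    finally have "real (b * s * F) - real s * (M * real F + 1) - 1 \<le> real b * R * real F"
      using D by simp
    then show ?thesis
      by (simp add: algebra_simps)
  qed
  then have "real b * real s - real s * M - real b * R \<le> 0"
    by (rule nonpos_if_mult_of_nat_bounded)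
  then show ?thesis
    using \<open>1 \<le> b\<close> by (simp add: field_simps)
qed

lemma achievable_exp_rate_nonneg:
  assumes "achievable_exp_rate M N s R" and "s \<le> N"
  shows "0 \<le> R"
proof -
  obtain F0 where "\<And>F. F0 \<le> F \<Longrightarrow> good_scheme M N s F R 1"
    using assms(1) unfolding achievable_exp_rate_def by (meson zero_less_one)
  then obtain L :: "(nat \<Rightarrow> nat) \<Rightarrow> nat" where
    rate: "(\<Sum>d\<in>distinct_demands N s. real (L d)) \<le> R * (real (Suc F0) * real (card (distinct_demands N s)))"
    unfolding good_scheme_def by (metis le_SucI le_refl mult.assoc)
  then have "0 \<le> R * (real (Suc F0) * real (card (distinct_demands N s)))"
    using sum_nonneg[of "distinct_demands N s" "\<lambda>d. real (L d)"] by linarith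
  moreover have "0 < real (Suc F0) * real (card (distinct_demands N s))"
    using card_distinct_demands_pos[OF assms(2)] by simp
  ultimately show ?thesis
    by (simp add: zero_le_mult_iff)
qed

lemma achievable_exp_rate_uncoded:
  assumes "0 \<le> M"
  shows "achievable_exp_rate M N s (real s)"
  unfolding achievable_exp_rate_def
proof (intro allI impI exI)
  fix eps :: real and F :: nat assume "0 < eps"
  define psi :: "(nat \<Rightarrow> nat) \<Rightarrow> (nat \<Rightarrow> bool list) \<Rightarrow> bool list"
    where "psi d W = concat (map (\<lambda>k. W (d k)) [0..<s])" for d W
  define mu :: "(nat \<Rightarrow> nat) \<Rightarrow> nat \<Rightarrow> bool list \<Rightarrow> bool list \<Rightarrow> bool list"
    where "mu d k msg cache = take F (drop (k * F) msg)" for d k msg cache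
  have length_file: "length (W (d k)) = F"
    if "W \<in> file_libs N F" "d \<in> distinct_demands N s" "k < s" for W d k
    using that unfolding file_libs_def distinct_demands_def by (auto simp: PiE_iff)
  have "caching_scheme M eps N s F (\<lambda>k W. []) psi mu (\<lambda>d. s * F)"
  proof unfold_locales
    fix d W assume "d \<in> distinct_demands N s" "W \<in> file_libs N F"
    then have "(\<Sum>k\<leftarrow>[0..<s]. length (W (d k))) = (\<Sum>k\<leftarrow>[0..<s]. F)"
      using length_file by (intro arg_cong[where f = sum_list] map_cong) simp_all
    then show "length (psi d W) = s * F"
      by (simp add: psi_def length_concat comp_def sum_list_triv)
  next
    fix d assume "d \<in> distinct_demands N s"
    then have "mu d k (psi d W) [] = W (d k)" if "W \<in> file_libs N F" "k < s" for W k
      using that length_file unfolding mu_def psi_def by (subst take_drop_concat_eq_nth) auto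
    then have no_errors: "{W \<in> file_libs N F. \<exists>k<s. mu d k (psi d W) [] \<noteq> W (d k)} = {}"
      by auto
    show "real (card {W \<in> file_libs N F. \<exists>k<s. mu d k (psi d W) [] \<noteq> W (d k)})
        \<le> eps * real (card (file_libs N F))"
      unfolding no_errors using \<open>0 < eps\<close> by simp
  qed (use \<open>0 \<le> M\<close> in simp)
  then show "good_scheme M N s F (real s) eps"
    unfolding good_scheme_iff by fastforce
qed

lemma Rbar_lower_bound:
  assumes "1 \<le> b" and "b * s \<le> N" and "0 \<le> M"
  shows "real s - real s * M / real b \<le> Rbar M N s"
  unfolding Rbar_def using achievable_exp_rate_uncoded[OF \<open>0 \<le> M\<close>]
  by (intro cInf_greatest) (auto intro: achievable_exp_rate_lower_bound[OF _ assms])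

lemma Rbar_nonneg:
  assumes "s \<le> N" and "0 \<le> M"
  shows "0 \<le> Rbar M N s"
  unfolding Rbar_def using achievable_exp_rate_uncoded[OF \<open>0 \<le> M\<close>]
  by (intro cInf_greatest) (auto intro: achievable_exp_rate_nonneg[OF _ \<open>s \<le> N\<close>])

lemma half_le_Rbar:
  assumes "1 \<le> s" and "4 * s \<le> N" and "4 * M * real s \<le> real N" and "0 \<le> M"
  shows "real s / 2 \<le> Rbar M N s"
proof -
  define b where "b = N div s"
  have "b * s \<le> N"
    by (simp add: b_def div_times_less_eq_dividend)
  have "N < (b + 1) * s"
    using \<open>1 \<le> s\<close> by (simp add: b_def dividend_less_times_div mult.commute)
  then have "(2 * M + 2) * real s < (real b + 1) * real s"
    using assms(2,3) by (simp add: algebra_simps flip: of_nat_mult)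
  then have "2 * M < real b"
    using \<open>1 \<le> s\<close> by (simp add: mult_less_cancel_right)
  then have "1 \<le> b" and "M / real b \<le> 1 / 2"
    using \<open>0 \<le> M\<close> by (auto simp: field_simps)
  then have "real s * M / real b \<le> real s / 2"
    using mult_left_mono[of "M / real b" "1 / 2" "real s"] by simp
  with Rbar_lower_bound[OF \<open>1 \<le> b\<close> \<open>b * s \<le> N\<close> \<open>0 \<le> M\<close>] show ?thesis
    by linarith
qed

lemma Rfun_le_min:
  assumes "0 < M" and "M \<le> real N"
  shows "Rfun M N K \<le> (1 - M / real N) * min (min (real N / M) (real K)) (real N)"
proof -
  define q where "q = 1 - M / real N"
  have q: "0 \<le> q" "q \<le> 1"
    using assms by (auto simp: q_def field_simps)
  have "1 - q ^ K \<le> 1"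
    using q by simp
  moreover have "1 - q ^ K \<le> real K * (M / real N)"
    using Bernoulli_inequality[of "- (M / real N)" K] assms by (simp add: q_def field_simps)
  ultimately have "real N / M * (1 - q ^ K) \<le> min (real N / M) (real K)"
    using assms by (auto simp: field_simps mult_left_mono)
  then show ?thesis
    using assms q by (auto simp: Rfun_def q_def[symmetric] intro!: mult_left_mono)
qed

lemma exists_Rbar_ge_Rfun_div_48_positive_cache:
  assumes "0 < M" and "M \<le> real N" and "0 < K"
  shows "\<exists>s\<in>{1..nat \<lceil>real (min N K) / 4\<rceil>}. Rfun M N K / 48 \<le> Rbar M N s"
proof -
  define t where "t = min (min (real N / M) (real K)) (real N)"
  have Rfun: "Rfun M N K \<le> (1 - M / real N) * t"
    unfolding t_def using Rfun_le_min[OF assms(1,2)] .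
  have "1 \<le> N"
    using assms(1,2) by linarith
  have q: "0 \<le> 1 - M / real N" "1 - M / real N \<le> 1"
    using assms(1,2) by (auto simp: field_simps)
  have t: "0 \<le> t" "t \<le> real (min N K)" "t \<le> real N / M"
    using \<open>0 < M\<close> by (auto simp: t_def)
  show ?thesis
  proof (cases "t < 48")
    case True
    have "Rfun M N K / 48 \<le> 1 - M / real N"
      using Rfun mult_left_mono[of t 48 "1 - M / real N"] True q by simp
    also have "\<dots> \<le> Rbar M N 1"
      using Rbar_lower_bound[where b = N and s = 1] \<open>1 \<le> N\<close> \<open>0 < M\<close> by simp
    finally have "Rfun M N K / 48 \<le> Rbar M N 1" .
    moreover have "1 \<le> nat \<lceil>real (min N K) / 4\<rceil>"
      using \<open>1 \<le> N\<close> \<open>0 < K\<close> by linarith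
    ultimately show ?thesis
      by (meson atLeastAtMost_iff le_refl)
  next
    case False
    define s where "s = nat \<lfloor>t / 4\<rfloor>"
    have s: "1 \<le> s" "4 * real s \<le> t" "t < 4 * real s + 4"
      using False t(1) unfolding s_def by linarith+
    have "4 * s \<le> N"
      using s(2) t(2) by simp
    have "4 * M * real s = M * (4 * real s)"
      by simp
    also have "\<dots> \<le> M * t"
      using s(2) \<open>0 < M\<close> by (intro mult_left_mono) auto
    also have "\<dots> \<le> real N"
      using t(3) \<open>0 < M\<close> by (simp add: field_simps)
    finally have "4 * M * real s \<le> real N" .
    with \<open>4 * s \<le> N\<close> have "real s / 2 \<le> Rbar M N s"
      using half_le_Rbar[OF s(1)] \<open>0 < M\<close> by simp
    moreover have "Rfun M N K \<le> t"
      using Rfun q t(1) mult_left_le_one_le[of t "1 - M / real N"] by linarith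
    moreover have "s \<le> nat \<lceil>real (min N K) / 4\<rceil>"
      using s(2) t(2) by linarith
    ultimately show ?thesis
      using s(1,3) by (intro bexI[of _ s]) auto
  qed
qed

lemma exists_Rbar_ge_Rfun_div_48:
  assumes "0 \<le> M" and "0 < N" and "0 < K"
  shows "\<exists>s\<in>{1..nat \<lceil>real (min N K) / 4\<rceil>}. Rfun M N K / 48 \<le> Rbar M N s"
proof -
  define S where "S = nat \<lceil>real (min N K) / 4\<rceil>"
  have S: "1 \<le> S" "S \<le> N" "real (min N K) \<le> 4 * real S"
    using assms(2,3) unfolding S_def by linarith+
  consider "M = 0" | "real N < M" | "0 < M" "M \<le> real N"
    using assms(1) by linarith
  then have "\<exists>s\<in>{1..S}. Rfun M N K / 48 \<le> Rbar M N s"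
  proof cases
    case 1
    then have "real S \<le> Rbar M N S"
      using Rbar_lower_bound[where b = 1 and s = S and N = N and M = M] S by simp
    then have "Rfun M N K / 48 \<le> Rbar M N S"
      using S(3) \<open>M = 0\<close> by (simp add: Rfun_def)
    then show ?thesis
      using S(1) by force
  next
    case 2
    then have "Rfun M N K / 48 \<le> Rbar M N 1"
      using Rbar_nonneg[where s = 1] assms by (simp add: Rfun_def)
    then show ?thesis
      using S(1) by force
  qed (use exists_Rbar_ge_Rfun_div_48_positive_cache assms(3) in \<open>simp add: S_def\<close>)
  then show ?thesis
    unfolding S_def .
qed

theorem lemma3:
  fixes M :: real and N K :: nat
  assumes "M \<ge> 0" and "N > 0" and "K > 0"
  shows "Max ((\<lambda>s. Rbar M N s) ` {1..nat \<lceil>real (min N K) / 4\<rceil>}) \<ge> Rfun M N K / 48"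
proof -
  obtain s where "s \<in> {1..nat \<lceil>real (min N K) / 4\<rceil>}" and "Rfun M N K / 48 \<le> Rbar M N s"
    using exists_Rbar_ge_Rfun_div_48[OF assms] by blast
  then show ?thesis
    by (meson Max_ge finite_atLeastAtMost finite_imageI image_eqI order_trans)
qed

end
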